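(* Let $U,V,X$ be random variables with $U,V$ taking values in finite sets $\mathcal{U},\mathcal{V}$ and $X$ taking values in $\mathcal{X}=\{0,1,\dots,m-1\}$. Define random variables $U^*$ on $\mathcal{U}\times\{0,\dots,m-1\}$, $V^*$ on $\mathcal{V}\times\{0,\dots,m-1\}$ and $X^*$ on $\mathcal{X}$ (writing $u_i=(u,i)$, $v_j=(v,j)$) by $$P(U^*=u_i,V^*=v_j)=\tfrac1m P(U=u,V=v,X=(i-j)_m),$$ $$P(X^*=k\mid U^*=u_i,V^*=v_j)=\begin{cases}1 & k=(i-j)_m\\ 0&\text{otherwise,}\end{cases}$$ where $(l)_m$ denotes the remainder of $l$ modulo $m$. Then for all $u\in\mathcal{U}$, $v\in\mathcal{V}$ and $0\le i,k\le m-1$: (i) $P(U^*=u_i)=\frac1m P(U=u)$; (ii) $P(V^*=v_i)=\frac1m P(V=v)$; (iii) $P(X^*=k\mid U^*=u_i)=P(X=k\mid U=u)$ whenever $P(U=u)>0$; (iv) $P(X^*=k\mid V^*=v_i)=P(X=k\mid V=v)$ whenever $P(V=v)>0$. *)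

theory Defs
  imports "HOL-Probability.Probability"
begin

definition rem_mod :: "nat \<Rightarrow> int \<Rightarrow> nat" where
  "rem_mod m l = nat (l mod int m)"

end

theory Submission
  imports Defs
begin

(* The hypotheses pin down the point masses of Q:
   pmf Q ((u, i), (v, j), k) = [k = (i - j)_m] * pmf P (u, v, k) / m.
   For fixed u_i, summing over v_j the map j |-> (i - j)_m permutes {0..m-1}, so the sum
   collapses to the corresponding marginal of P times 1/m, for every event on X^*; the same
   holds for fixed v_j with i |-> (i - j)_m. In the conditional probabilities the factor 1/m
   cancels. *)

lemma rem_mod_lt: "0 < m \<Longrightarrow> rem_mod m l < m"
  unfolding rem_mod_def by (simp add: nat_less_iff)

lemma rem_mod_eq_iff: "0 < m \<Longrightarrow> rem_mod m a = rem_mod m b \<longleftrightarrow> a mod int m = b mod int m"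
  unfolding rem_mod_def by (simp add: eq_nat_nat_iff)

lemma bij_betw_rem_mod_const_minus:
  assumes "0 < m"
  shows "bij_betw (\<lambda>j. rem_mod m (c - int j)) {..<m} {..<m}"
proof -
  have "inj_on (\<lambda>j. rem_mod m (c - int j)) {..<m}"
  proof (rule inj_onI)
    fix a b
    assume "a \<in> {..<m}" "b \<in> {..<m}" "rem_mod m (c - int a) = rem_mod m (c - int b)"
    then have "(c - int a) mod int m = (c - int b) mod int m"
      using assms by (simp add: rem_mod_eq_iff)
    then have "(c - (c - int a)) mod int m = (c - (c - int b)) mod int m"
      by (rule mod_diff_cong[OF refl])
    with \<open>a \<in> {..<m}\<close> \<open>b \<in> {..<m}\<close> show "a = b" by simp
  qed
  moreover have "(\<lambda>j. rem_mod m (c - int j)) ` {..<m} \<subseteq> {..<m}"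
    using rem_mod_lt[OF assms] by blast
  ultimately show ?thesis
    by (simp add: bij_betw_def endo_inj_surj)
qed

lemma bij_betw_rem_mod_minus_const:
  assumes "0 < m"
  shows "bij_betw (\<lambda>i. rem_mod m (int i - c)) {..<m} {..<m}"
proof -
  have "inj_on (\<lambda>i. rem_mod m (int i - c)) {..<m}"
  proof (rule inj_onI)
    fix a b
    assume "a \<in> {..<m}" "b \<in> {..<m}" "rem_mod m (int a - c) = rem_mod m (int b - c)"
    then have "(int a - c) mod int m = (int b - c) mod int m"
      using assms by (simp add: rem_mod_eq_iff)
    then have "(int a - c + c) mod int m = (int b - c + c) mod int m"
      by (rule mod_add_cong[OF _ refl])
    with \<open>a \<in> {..<m}\<close> \<open>b \<in> {..<m}\<close> show "a = b" by simp
  qed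
  moreover have "(\<lambda>i. rem_mod m (int i - c)) ` {..<m} \<subseteq> {..<m}"
    using rem_mod_lt[OF assms] by blast
  ultimately show ?thesis
    by (simp add: bij_betw_def endo_inj_surj)
qed

lemma measure_pmf_eq_sum_pmf:
  assumes "finite S" and "set_pmf p \<subseteq> S"
  shows "measure_pmf.prob p A = sum (pmf p) (S \<inter> A)"
proof -
  have "S \<inter> A \<inter> set_pmf p = A \<inter> set_pmf p"
    using assms(2) by blast
  then have "measure_pmf.prob p A = measure_pmf.prob p (S \<inter> A)"
    by (metis measure_Int_set_pmf)
  then show ?thesis
    using assms(1) by (simp add: measure_measure_pmf_finite)
qed

lemma cond_prob_eq_if_scaled:
  assumes "c \<noteq> 0"
    and "\<P>(x in M. A x \<and> B x) = c * \<P>(y in N. A' y \<and> B' y)"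
    and "\<P>(x in M. B x) = c * \<P>(y in N. B' y)"
  shows "cond_prob M A B = cond_prob N A' B'"
  unfolding cond_prob_def using assms by simp

locale mod_difference_lift =
  fixes m :: nat
    and P :: "('u::finite \<times> 'v::finite \<times> nat) pmf"
    and Q :: "(('u \<times> nat) \<times> ('v \<times> nat) \<times> nat) pmf"
  assumes m_pos: "m \<ge> 1"
    and X_range: "\<forall>(u, v, x) \<in> set_pmf P. x < m"
    and star_range: "\<forall>((u, i), (v, j), k) \<in> set_pmf Q. i < m \<and> j < m \<and> k < m"
    and joint_UV: "\<And>u v i j. i < m \<Longrightarrow> j < m \<Longrightarrow>
        \<P>(\<omega> in measure_pmf Q. fst \<omega> = (u, i) \<and> fst (snd \<omega>) = (v, j))
          = (1 / real m) * \<P>(\<omega> in measure_pmf P. fst \<omega> = u \<and> fst (snd \<omega>) = v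
                                   \<and> snd (snd \<omega>) = rem_mod m (int i - int j))"
    and cond_X: "\<And>u v i j k. i < m \<Longrightarrow> j < m \<Longrightarrow> k < m \<Longrightarrow>
        \<P>(\<omega> in measure_pmf Q. fst \<omega> = (u, i) \<and> fst (snd \<omega>) = (v, j)) > 0 \<Longrightarrow>
        \<P>(\<omega> in measure_pmf Q. snd (snd \<omega>) = k \<bar> fst \<omega> = (u, i) \<and> fst (snd \<omega>) = (v, j))
          = (if k = rem_mod m (int i - int j) then 1 else 0)"
begin

lemma prob_P_eq_sum:
  "measure_pmf.prob P (A \<times> B \<times> E)
    = (\<Sum>u\<in>A. \<Sum>v\<in>B. \<Sum>x<m. if x \<in> E then pmf P (u, v, x) else 0)"
proof -
  have "measure_pmf.prob P (A \<times> B \<times> E)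
      = sum (pmf P) ((UNIV \<times> UNIV \<times> {..<m}) \<inter> (A \<times> B \<times> E))"
    by (rule measure_pmf_eq_sum_pmf) (use X_range in auto)
  then show ?thesis
    by (simp add: Times_Int_Times sum.cartesian_product' sum.inter_restrict)
qed

lemma prob_U_star_V_star:
  assumes "i < m" and "j < m"
  shows "\<P>(\<omega> in Q. fst \<omega> = (u, i) \<and> fst (snd \<omega>) = (v, j))
    = pmf P (u, v, rem_mod m (int i - int j)) / m"
proof -
  have "{\<omega>. fst \<omega> = u \<and> fst (snd \<omega>) = v \<and> snd (snd \<omega>) = rem_mod m (int i - int j)}
      = {(u, v, rem_mod m (int i - int j))}"
    by auto
  then show ?thesis
    using joint_UV[OF assms, of u v] by (simp add: measure_pmf_single)
qed

lemma pmf_Q: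
  assumes "i < m" and "j < m" and "k < m"
  shows "pmf Q ((u, i), (v, j), k)
    = (if k = rem_mod m (int i - int j) then pmf P (u, v, k) / m else 0)"
proof -
  let ?UV = "\<P>(\<omega> in Q. fst \<omega> = (u, i) \<and> fst (snd \<omega>) = (v, j))"
  have "{\<omega>. snd (snd \<omega>) = k \<and> fst \<omega> = (u, i) \<and> fst (snd \<omega>) = (v, j)}
      = {((u, i), (v, j), k)}"
    by auto
  then have point: "pmf Q ((u, i), (v, j), k)
      = \<P>(\<omega> in Q. snd (snd \<omega>) = k \<and> fst \<omega> = (u, i) \<and> fst (snd \<omega>) = (v, j))"
    by (simp add: measure_pmf_single)
  have "pmf Q ((u, i), (v, j), k) = (if k = rem_mod m (int i - int j) then 1 else 0) * ?UV"
  proof (cases "?UV = 0")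
    case True
    moreover have "pmf Q ((u, i), (v, j), k) \<le> ?UV"
      unfolding point by (intro measure_pmf.finite_measure_mono) auto
    ultimately show ?thesis
      using pmf_nonneg[of Q "((u, i), (v, j), k)"] by simp
  next
    case False
    then have "?UV > 0"
      by (simp add: zero_less_measure_iff)
    then show ?thesis
      using False cond_X[OF assms, of u v] by (simp add: point cond_prob_def field_simps)
  qed
  then show ?thesis
    using prob_U_star_V_star[OF assms(1,2)] by simp
qed

lemma sum_pmf_Q_over_X:
  assumes "i < m" and "j < m"
  shows "(\<Sum>k\<in>{..<m} \<inter> E. pmf Q ((u, i), (v, j), k))
    = (if rem_mod m (int i - int j) \<in> E then pmf P (u, v, rem_mod m (int i - int j)) else 0) / m"
proof -
  let ?r = "rem_mod m (int i - int j)"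
  have "(\<Sum>k\<in>{..<m} \<inter> E. pmf Q ((u, i), (v, j), k))
      = (\<Sum>k\<in>{..<m} \<inter> E. if k = ?r then pmf P (u, v, ?r) / m else 0)"
    using assms by (intro sum.cong) (auto simp: pmf_Q)
  moreover have "?r < m"
    using m_pos by (simp add: rem_mod_lt)
  ultimately show ?thesis
    by simp
qed

lemma prob_Q_eq_sum:
  "measure_pmf.prob Q ((A \<times> I) \<times> (B \<times> J) \<times> E)
    = (\<Sum>u\<in>A. \<Sum>i\<in>{..<m} \<inter> I. \<Sum>v\<in>B. \<Sum>j\<in>{..<m} \<inter> J.
         (if rem_mod m (int i - int j) \<in> E then pmf P (u, v, rem_mod m (int i - int j)) else 0) / m)"
  (is "_ = ?rhs")
proof -
  have "measure_pmf.prob Q ((A \<times> I) \<times> (B \<times> J) \<times> E)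
      = sum (pmf Q) (((UNIV \<times> {..<m}) \<times> (UNIV \<times> {..<m}) \<times> {..<m})
                      \<inter> ((A \<times> I) \<times> (B \<times> J) \<times> E))"
    by (rule measure_pmf_eq_sum_pmf) (use star_range in auto)
  also have "\<dots> = (\<Sum>u\<in>A. \<Sum>i\<in>{..<m} \<inter> I. \<Sum>v\<in>B. \<Sum>j\<in>{..<m} \<inter> J.
      \<Sum>k\<in>{..<m} \<inter> E. pmf Q ((u, i), (v, j), k))"
    by (simp add: Times_Int_Times sum.cartesian_product')
  also have "\<dots> = ?rhs"
    by (intro sum.cong refl) (simp add: sum_pmf_Q_over_X)
  finally show ?thesis .
qed

lemma prob_X_and_U_star:
  assumes "i < m"
  shows "\<P>(\<omega> in Q. snd (snd \<omega>) \<in> E \<and> fst \<omega> = (u, i))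
    = 1 / real m * \<P>(\<omega> in P. snd (snd \<omega>) \<in> E \<and> fst \<omega> = u)"
proof -
  let ?p = "\<lambda>v x. if x \<in> E then pmf P (u, v, x) else 0"
  have "\<P>(\<omega> in Q. snd (snd \<omega>) \<in> E \<and> fst \<omega> = (u, i))
      = measure_pmf.prob Q (({u} \<times> {i}) \<times> (UNIV \<times> UNIV) \<times> E)"
    by (rule arg_cong) auto
  also have "\<dots> = (\<Sum>v\<in>UNIV. \<Sum>j<m. ?p v (rem_mod m (int i - int j)) / m)"
    \<comment> \<open>With the default congruence rule for sums, simp gets stuck on the index set
      {..<m} \<inter> {i}.\<close>
    using assms by (subst prob_Q_eq_sum) (simp cong del: sum.cong_simp)
  also have "\<dots> = (\<Sum>v\<in>UNIV. \<Sum>x<m. ?p v x / m)"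
    using m_pos by (intro sum.cong refl sum.reindex_bij_betw bij_betw_rem_mod_const_minus) simp
  also have "\<dots> = measure_pmf.prob P ({u} \<times> UNIV \<times> E) / m"
    by (simp add: prob_P_eq_sum sum_divide_distrib)
  also have "measure_pmf.prob P ({u} \<times> UNIV \<times> E)
      = \<P>(\<omega> in P. snd (snd \<omega>) \<in> E \<and> fst \<omega> = u)"
    by (rule arg_cong) auto
  finally show ?thesis
    by simp
qed

lemma prob_X_and_V_star:
  assumes "j < m"
  shows "\<P>(\<omega> in Q. snd (snd \<omega>) \<in> E \<and> fst (snd \<omega>) = (v, j))
    = 1 / real m * \<P>(\<omega> in P. snd (snd \<omega>) \<in> E \<and> fst (snd \<omega>) = v)"
proof -
  let ?p = "\<lambda>u x. if x \<in> E then pmf P (u, v, x) else 0"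
  have "\<P>(\<omega> in Q. snd (snd \<omega>) \<in> E \<and> fst (snd \<omega>) = (v, j))
      = measure_pmf.prob Q ((UNIV \<times> UNIV) \<times> ({v} \<times> {j}) \<times> E)"
    by (rule arg_cong) auto
  also have "\<dots> = (\<Sum>u\<in>UNIV. \<Sum>i<m. ?p u (rem_mod m (int i - int j)) / m)"
    using assms by (subst prob_Q_eq_sum) (simp cong del: sum.cong_simp)
  also have "\<dots> = (\<Sum>u\<in>UNIV. \<Sum>x<m. ?p u x / m)"
    using m_pos by (intro sum.cong refl sum.reindex_bij_betw bij_betw_rem_mod_minus_const) simp
  also have "\<dots> = measure_pmf.prob P (UNIV \<times> {v} \<times> E) / m"
    by (simp add: prob_P_eq_sum sum_divide_distrib)
  also have "measure_pmf.prob P (UNIV \<times> {v} \<times> E)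
      = \<P>(\<omega> in P. snd (snd \<omega>) \<in> E \<and> fst (snd \<omega>) = v)"
    by (rule arg_cong) auto
  finally show ?thesis
    by simp
qed

end

theorem lemma3p3:
  fixes m :: nat
    and P :: "('u::finite \<times> 'v::finite \<times> nat) pmf"
    and Q :: "(('u \<times> nat) \<times> ('v \<times> nat) \<times> nat) pmf"
  assumes m_pos: "m \<ge> 1"
    and X_range: "\<forall>(u, v, x) \<in> set_pmf P. x < m"
    and star_range: "\<forall>((u, i), (v, j), k) \<in> set_pmf Q. i < m \<and> j < m \<and> k < m"
    and joint_UV: "\<And>u v i j. i < m \<Longrightarrow> j < m \<Longrightarrow>
        \<P>(\<omega> in measure_pmf Q. fst \<omega> = (u, i) \<and> fst (snd \<omega>) = (v, j))
          = (1 / real m) * \<P>(\<omega> in measure_pmf P. fst \<omega> = u \<and> fst (snd \<omega>) = v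
                                   \<and> snd (snd \<omega>) = rem_mod m (int i - int j))"
    and cond_X: "\<And>u v i j k. i < m \<Longrightarrow> j < m \<Longrightarrow> k < m \<Longrightarrow>
        \<P>(\<omega> in measure_pmf Q. fst \<omega> = (u, i) \<and> fst (snd \<omega>) = (v, j)) > 0 \<Longrightarrow>
        \<P>(\<omega> in measure_pmf Q. snd (snd \<omega>) = k \<bar> fst \<omega> = (u, i) \<and> fst (snd \<omega>) = (v, j))
          = (if k = rem_mod m (int i - int j) then 1 else 0)"
  shows "(\<forall>u i. i < m \<longrightarrow>
           \<P>(\<omega> in measure_pmf Q. fst \<omega> = (u, i)) = (1 / real m) * \<P>(\<omega> in measure_pmf P. fst \<omega> = u)) \<and>
         (\<forall>v i. i < m \<longrightarrow>
           \<P>(\<omega> in measure_pmf Q. fst (snd \<omega>) = (v, i)) = (1 / real m) * \<P>(\<omega> in measure_pmf P. fst (snd \<omega>) = v)) \<and>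
         (\<forall>u i k. i < m \<longrightarrow> k < m \<longrightarrow> \<P>(\<omega> in measure_pmf P. fst \<omega> = u) > 0 \<longrightarrow>
           \<P>(\<omega> in measure_pmf Q. snd (snd \<omega>) = k \<bar> fst \<omega> = (u, i))
             = \<P>(\<omega> in measure_pmf P. snd (snd \<omega>) = k \<bar> fst \<omega> = u)) \<and>
         (\<forall>v i k. i < m \<longrightarrow> k < m \<longrightarrow> \<P>(\<omega> in measure_pmf P. fst (snd \<omega>) = v) > 0 \<longrightarrow>
           \<P>(\<omega> in measure_pmf Q. snd (snd \<omega>) = k \<bar> fst (snd \<omega>) = (v, i))
             = \<P>(\<omega> in measure_pmf P. snd (snd \<omega>) = k \<bar> fst (snd \<omega>) = v))"
proof -
  interpret mod_difference_lift m P Q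
    using assms by unfold_locales
  have "real m \<noteq> 0"
    using m_pos by simp
  have marg_U: "\<P>(\<omega> in Q. fst \<omega> = (u, i))
      = 1 / real m * \<P>(\<omega> in P. fst \<omega> = u)"
    if "i < m" for u i
    using prob_X_and_U_star[OF that, of UNIV] by simp
  have marg_V: "\<P>(\<omega> in Q. fst (snd \<omega>) = (v, j))
      = 1 / real m * \<P>(\<omega> in P. fst (snd \<omega>) = v)"
    if "j < m" for v j
    using prob_X_and_V_star[OF that, of UNIV] by simp
  have cond_U: "\<P>(\<omega> in Q. snd (snd \<omega>) = k \<bar> fst \<omega> = (u, i))
      = \<P>(\<omega> in P. snd (snd \<omega>) = k \<bar> fst \<omega> = u)"
    if "i < m" for u i k
    using \<open>real m \<noteq> 0\<close> prob_X_and_U_star[OF that, of "{k}"] marg_U[OF that]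
    by (intro cond_prob_eq_if_scaled[where c = "1 / real m"]) simp_all
  have cond_V: "\<P>(\<omega> in Q. snd (snd \<omega>) = k \<bar> fst (snd \<omega>) = (v, j))
      = \<P>(\<omega> in P. snd (snd \<omega>) = k \<bar> fst (snd \<omega>) = v)"
    if "j < m" for v j k
    using \<open>real m \<noteq> 0\<close> prob_X_and_V_star[OF that, of "{k}"] marg_V[OF that]
    by (intro cond_prob_eq_if_scaled[where c = "1 / real m"]) simp_all
  show ?thesis
    using marg_U marg_V cond_U cond_V by blast
qed

end
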